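(* For every integer $k \geq 1$, let $\mathcal{B}(k)$ denote the greatest common divisor of all the sums $\sum_{i=1}^{k} B_{n+i}$, $n \geq 0$. Then $$\mathcal{B}(k) = \begin{cases} \tfrac{1}{2}P_{k}, & \text{if } k \text{ is even};\\ Q_{k}, & \text{if } k \text{ is odd}.\end{cases}$$
   Context: The Pell sequence $(P_n)_{n\ge0}$ is defined by $P_0=0$, $P_1=1$, $P_n = 2P_{n-1}+P_{n-2}$. The associated Pell sequence $(Q_n)_{n\ge0}$ is defined by $Q_0=1$, $Q_1=1$, $Q_n=2Q_{n-1}+Q_{n-2}$. The balancing sequence $(B_n)_{n\ge0}$ is defined by $B_0=0$, $B_1=1$, $B_n=6B_{n-1}-B_{n-2}$. *)

theory Defs
  imports Main
begin

fun pell :: "nat \<Rightarrow> int" where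
  "pell 0 = 0"
| "pell (Suc 0) = 1"
| "pell (Suc (Suc n)) = 2 * pell (Suc n) + pell n"

fun assoc_pell :: "nat \<Rightarrow> int" where
  "assoc_pell 0 = 1"
| "assoc_pell (Suc 0) = 1"
| "assoc_pell (Suc (Suc n)) = 2 * assoc_pell (Suc n) + assoc_pell n"

fun balancing :: "nat \<Rightarrow> int" where
  "balancing 0 = 0"
| "balancing (Suc 0) = 1"
| "balancing (Suc (Suc n)) = 6 * balancing (Suc n) - balancing n"

definition balancing_gcd :: "nat \<Rightarrow> int" where
  "balancing_gcd k = Gcd {(\<Sum>i=1..k. balancing (n + i)) | n. n \<ge> 0}"

end

theory Submission
  imports Defs
begin

text \<open>
  Write S(k) = B(1) + ... + B(k). The addition formula
  B(n + i) = B(n + 1) B(i) - B(n) B(i - 1) gives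
  B(n + 1) + ... + B(n + k) = B(n + 1) S(k) - B(n) S(k - 1), and the cases n = 0, 1
  show that the gcd of all these sums is gcd (S(k)) (S(k - 1)). With C(m) = B(m) + B(m + 1)
  the partial sums factor as S(2m) = B(m) C(m) and S(2m + 1) = B(m + 1) C(m). Both B and C
  satisfy x(n + 2) = 6 x(n + 1) - x(n) with coprime initial terms, so consecutive terms are
  coprime and the gcd is C(m) = Q(2m + 1) for k = 2m + 1, and B(m + 1) = P(2m + 2) / 2 for
  k = 2m + 2.
\<close>

lemma recurrence_coprime_consecutive:
  fixes u :: "nat \<Rightarrow> int"
  assumes rec: "\<And>n. u (n + 2) = c * u (n + 1) - u n"
    and init: "coprime (u 0) (u 1)"
  shows "coprime (u n) (u (n + 1))"
proof (induction n)
  case (Suc n)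
  have "gcd (u (n + 1)) (c * u (n + 1) - u n) = gcd (u (n + 1)) (u n)"
    by (metis diff_conv_add_uminus gcd_add_mult gcd_neg2)
  then show ?case
    using Suc rec[of n] by (simp add: coprime_iff_gcd_eq_1 gcd.commute)
qed (use init in simp)

lemma balancing_rec: "balancing (n + 2) = 6 * balancing (n + 1) - balancing n"
  by (simp add: numeral_eq_Suc)

lemma balancing_add:
  "balancing (m + n + 1) = balancing (m + 1) * balancing (n + 1) - balancing m * balancing n"
proof (induction n rule: balancing.induct)
  case (3 n)
  then show ?case
    using balancing_rec[of "m + n + 1"] balancing_rec[of n]
    by (simp add: algebra_simps)
qed (simp_all add: numeral_eq_Suc)

lemma balancing_even:
  "balancing (2 * m + 2) = balancing (m + 1) * (balancing (m + 2) - balancing m)"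
proof -
  have "2 * m + 2 = m + (m + 1) + 1" by simp
  then have "balancing (2 * m + 2) = balancing (m + (m + 1) + 1)" by (simp only:)
  then show ?thesis
    using balancing_add[of m "m + 1"] balancing_rec[of m] by (simp add: algebra_simps)
qed

lemma balancing_odd:
  "balancing (2 * m + 1) = (balancing m + balancing (m + 1)) * (balancing (m + 1) - balancing m)"
proof -
  have "2 * m + 1 = m + m + 1" by simp
  then have "balancing (2 * m + 1) = balancing (m + m + 1)" by (simp only:)
  then show ?thesis using balancing_add[of m m] by (simp add: algebra_simps)
qed

lemma balancing_nonneg_mono: "0 \<le> balancing n \<and> balancing n \<le> balancing (n + 1)"
  by (induction n) (auto simp: balancing_rec)

lemma balancing_nonneg: "0 \<le> balancing n"
  using balancing_nonneg_mono by blast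

lemma coprime_balancing_consecutive: "coprime (balancing n) (balancing (n + 1))"
  by (rule recurrence_coprime_consecutive[OF balancing_rec]) simp

lemma coprime_balancing_pair_sums:
  "coprime (balancing n + balancing (n + 1)) (balancing (n + 1) + balancing (n + 2))"
  using recurrence_coprime_consecutive[where u = "\<lambda>n. balancing n + balancing (n + 1)" and c = 6]
  by (simp add: balancing_rec algebra_simps numeral_eq_Suc)

lemma sum_balancing_shift:
  "(\<Sum>i=1..k. balancing (n + i)) =
     balancing (n + 1) * (\<Sum>i<Suc k. balancing i) - balancing n * (\<Sum>i<k. balancing i)"
proof (induction k)
  case (Suc k)
  then show ?case using balancing_add[of n k] by (simp add: algebra_simps)
qed simp

lemma sum_balancing_double:
  "(\<Sum>i<Suc (2 * m). balancing i) = balancing m * (balancing m + balancing (Suc m)) \<and>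
   (\<Sum>i<2 * Suc m. balancing i) = balancing (Suc m) * (balancing m + balancing (Suc m))"
proof (induction m)
  case (Suc m)
  have even: "(\<Sum>i<Suc (2 * Suc m). balancing i) =
      balancing (m + 1) * (balancing (m + 1) + balancing (m + 2))"
    using Suc balancing_even[of m] by (simp add: algebra_simps)
  moreover have "(\<Sum>i<2 * Suc (Suc m). balancing i) =
      balancing (m + 2) * (balancing (m + 1) + balancing (m + 2))"
    using even balancing_odd[of "m + 1"] by (simp add: algebra_simps)
  ultimately show ?case by (simp add: numeral_eq_Suc)
qed (simp add: numeral_eq_Suc)

lemma balancing_gcd_eq_gcd_partial_sums:
  "balancing_gcd k = gcd (\<Sum>i<Suc k. balancing i) (\<Sum>i<k. balancing i)"
proof -
  let ?S = "\<Sum>i<Suc k. balancing i" and ?S' = "\<Sum>i<k. balancing i"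
  let ?T = "{(\<Sum>i=1..k. balancing (n + i)) | n. n \<ge> 0}"
  have "Gcd ?T = gcd ?S ?S'"
  proof (rule Gcd_eqI)
    show "gcd ?S ?S' dvd t" if "t \<in> ?T" for t
    proof -
      from that obtain n where t: "t = (\<Sum>i=1..k. balancing (n + i))" by blast
      show ?thesis
        by (simp only: t sum_balancing_shift) (intro dvd_diff dvd_mult gcd_dvd1 gcd_dvd2)
    qed
    show "c dvd gcd ?S ?S'" if dvd_T: "\<And>t. t \<in> ?T \<Longrightarrow> c dvd t" for c
    proof -
      have "c dvd balancing (n + 1) * ?S - balancing n * ?S'" for n
        using dvd_T[of "\<Sum>i=1..k. balancing (n + i)"] unfolding sum_balancing_shift by blast
      from this[of 0] this[of 1] have "c dvd ?S" and "c dvd 6 * ?S - ?S'"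
        by (simp_all add: numeral_eq_Suc)
      then have "c dvd 6 * ?S - (6 * ?S - ?S')"
        by (blast intro: dvd_diff dvd_mult)
      with \<open>c dvd ?S\<close> show ?thesis
        by (simp add: gcd_greatest_iff)
    qed
  qed simp
  then show ?thesis unfolding balancing_gcd_def .
qed

lemma pell_eq_balancing:
  "pell (2 * m) = 2 * balancing m \<and> pell (2 * m + 1) = balancing (m + 1) - balancing m"
proof (induction m)
  case (Suc m)
  then show ?case
    using balancing_rec[of m] by (simp add: numeral_eq_Suc algebra_simps)
qed simp

lemma assoc_pell_eq_balancing:
  "assoc_pell (2 * m + 1) = balancing m + balancing (m + 1) \<and>
   assoc_pell (2 * m + 2) = 3 * balancing (m + 1) - balancing m"
proof (induction m)
  case (Suc m)
  then show ?case
    using balancing_rec[of m] by (simp add: numeral_eq_Suc algebra_simps)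
qed (simp add: numeral_eq_Suc)

theorem theorem17:
  fixes k :: nat
  assumes "k \<ge> 1"
  shows "balancing_gcd k = (if even k then pell k div 2 else assoc_pell k)"
proof (cases "even k")
  case True
  then obtain b where "k = 2 * b" by (rule evenE)
  with assms obtain m where k: "k = 2 * Suc m" by (cases b) auto
  have "balancing_gcd k =
      gcd (balancing (Suc m) * (balancing (Suc m) + balancing (Suc (Suc m))))
          (balancing (Suc m) * (balancing m + balancing (Suc m)))"
    unfolding balancing_gcd_eq_gcd_partial_sums k
    using sum_balancing_double[of "Suc m"] sum_balancing_double[of m] by (simp only:)
  also have "\<dots> = balancing (Suc m)"
    using coprime_balancing_pair_sums[of m]
    by (simp add: gcd_mult_left balancing_nonneg coprime_commute)
  finally show ?thesis using pell_eq_balancing[of "Suc m"] k by simp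
next
  case False
  then obtain m where k: "k = Suc (2 * m)" by (auto elim: oddE)
  then have "Suc k = 2 * Suc m" by simp
  then have "balancing_gcd k =
      gcd (balancing (Suc m) * (balancing m + balancing (Suc m)))
          (balancing m * (balancing m + balancing (Suc m)))"
    unfolding balancing_gcd_eq_gcd_partial_sums
    using sum_balancing_double[of m] by (simp only: k)
  also have "\<dots> = balancing m + balancing (Suc m)"
    using coprime_balancing_consecutive[of m]
    by (simp add: gcd_mult_right balancing_nonneg coprime_commute)
  finally show ?thesis using assoc_pell_eq_balancing[of m] k by simp
qed

end
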